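(* Suppose $(b,s) = 1$, $r | b^{\infty}$ (all prime factors of $r$ divide $b$), and $a_m$ is an arbitrary finite sequence of complex numbers. Then \begin{equation*} \sum_{\substack{x \bmod b \\ (x,b)=1}} \Big|\sum_{m \geq 1} a_m S(0, m;s) S(rx,m;br)\Big|^2 \leq br^2 s \sum_{\substack{x \bmod bs \\ (x,bs)=1}} \Big|\sum_{m \equiv 0 \bmod r} a_m e\Big(\frac{x m/r}{bs}\Big)\Big|^2, \end{equation*} where $S(a,b;c)$ denotes the classical Kloosterman sum and $e(x)=e^{2\pi i x}$. *)

theory Defs
  imports "HOL-Analysis.Analysis" "HOL-Number_Theory.Number_Theory"
begin

definition e :: "real \<Rightarrow> complex" where
  "e x = exp (2 * pi * \<i> * complex_of_real x)"

definition modinv :: "int \<Rightarrow> nat \<Rightarrow> int" where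
  "modinv x c = (SOME y. 0 \<le> y \<and> y < int c \<and> [x * y = 1] (mod int c))"

definition kloosterman :: "int \<Rightarrow> int \<Rightarrow> nat \<Rightarrow> complex" where
  "kloosterman a n c =
     (\<Sum>x\<in>{x\<in>{0..<int c}. coprime x (int c)}.
        e (real_of_int (a * x + n * modinv x c) / real c))"

end

theory Submission
  imports Defs
begin

text \<open>
  Substituting \<open>y \<mapsto> y\<inverse>\<close> in \<open>S(rx, m; br)\<close> and writing the residues modulo
  \<open>br\<close> as \<open>z + bt\<close> with \<open>z\<close> a reduced residue modulo \<open>b\<close> (legitimate because
  every prime factor of \<open>r\<close> divides \<open>b\<close>), the inverse modulo \<open>b\<close> depends only
  on \<open>z\<close> and the sum over \<open>t\<close> is a complete character sum modulo \<open>r\<close>. Hence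
  \<open>S(rx, m; br)\<close> vanishes unless \<open>r | m\<close>, and the inner sum becomes
  \<open>r \<Sum>\<^sub>z e(x z\<inverse>/b) \<Sum>\<^sub>v T(sz + brv)\<close> with
  \<open>T(w) = \<Sum>\<^bsub>r|m\<^esub> a\<^sub>m e(w (m/r)/(bs))\<close>, where \<open>v\<close> runs over the
  reduced residues modulo \<open>s\<close> coming from \<open>S(0, m; s)\<close>. Extending the sum over
  \<open>x\<close> to all residues modulo \<open>b\<close> and using orthogonality of characters gives
  \<open>b \<Sum>\<^sub>z |\<Sum>\<^sub>v T(sz + brv)|\<^sup>2\<close>; Cauchy--Schwarz in \<open>v\<close> costs a
  factor \<open>s\<close>, and by the Chinese remainder theorem \<open>(z, v) \<mapsto> sz + brv\<close> is
  injective into the reduced residues modulo \<open>bs\<close>.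
\<close>

section \<open>The additive character\<close>

lemma e_add: "e (x + y) = e x * e y"
  unfolding e_def by (simp add: distrib_left exp_add)

lemma e_of_int [simp]: "e (of_int k) = 1"
  unfolding e_def using exp_2pi_1_int[of k] by (simp add: mult_ac)

lemma e_zero [simp]: "e 0 = 1"
  using e_of_int[of 0] by simp

lemma cnj_e: "cnj (e x) = e (- x)"
  unfolding e_def by (simp add: exp_cnj)

lemma e_eq_1_iff: "e x = 1 \<longleftrightarrow> x \<in> \<int>"
proof
  assume "e x = 1"
  then obtain n where "2 * pi * x = real_of_int (2 * n) * pi"
    unfolding e_def exp_eq_1 by auto
  then show "x \<in> \<int>" by simp
qed (auto elim: Ints_cases)

lemma e_div_cong:
  assumes "[u = v] (mod int c)"
  shows "e (of_int u / real c) = e (of_int v / real c)"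
proof (cases "c = 0")
  case False
  obtain k where "u = v + int c * k"
    using assms by (metis cong_iff_lin cong_sym)
  then have "of_int u / real c = of_int v / real c + of_int k"
    using False by (simp add: field_simps)
  then show ?thesis by (simp add: e_add)
qed simp

lemma e_mod_mult_div: "e (of_int (w mod int c) * real n / real c) = e (of_int w * real n / real c)"
  using e_div_cong[of "w mod int c * int n" "w * int n" c]
  by (simp add: cong_def mod_mult_left_eq)

lemma sum_e_mult_div:
  assumes "c > 0"
  shows "(\<Sum>t\<in>{0..<int c}. e (of_int (d * t) / real c)) = (if int c dvd d then of_nat c else 0)"
proof -
  define \<omega> where "\<omega> = e (of_int d / real c)"
  have pow: "\<omega> ^ t = e (of_int (d * int t) / real c)" for t
    by (induction t) (simp_all add: \<omega>_def e_add[symmetric] add_divide_distrib algebra_simps)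
  have "{0..<int c} = int ` {..<c}"
    using image_int_atLeastLessThan[of 0 c] by (simp add: atLeast0LessThan)
  then have "(\<Sum>t\<in>{0..<int c}. e (of_int (d * t) / real c)) = (\<Sum>t<c. \<omega> ^ t)"
    by (simp add: pow sum.reindex)
  also have "\<dots> = (if int c dvd d then of_nat c else 0)"
  proof (cases "int c dvd d")
    case True
    then have "\<omega> = 1" using assms by (auto simp: \<omega>_def)
    then show ?thesis using True by simp
  next
    case False
    have "\<omega> \<noteq> 1"
    proof
      assume "\<omega> = 1"
      then obtain k where "of_int d / real c = of_int k"
        unfolding \<omega>_def e_eq_1_iff by (auto elim: Ints_cases)
      then have "real_of_int d = real_of_int (int c * k)"
        using assms by (simp add: field_simps)
      then have "d = int c * k"
        by (simp only: of_int_eq_iff)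
      then show False using False by auto
    qed
    moreover have "\<omega> ^ c = 1" using assms by (simp add: pow)
    ultimately show ?thesis using False by (simp add: geometric_sum)
  qed
  finally show ?thesis .
qed

section \<open>Reduced residues and modular inverses\<close>

definition reduced_residues :: "nat \<Rightarrow> int set" where
  "reduced_residues c = {x\<in>{0..<int c}. coprime x (int c)}"

lemma reduced_residues_subset: "reduced_residues c \<subseteq> {0..<int c}"
  by (auto simp: reduced_residues_def)

lemma finite_reduced_residues [simp]: "finite (reduced_residues c)"
  using reduced_residues_subset by (rule finite_subset) simp

lemma card_reduced_residues_le: "card (reduced_residues c) \<le> c"
  using card_mono[OF _ reduced_residues_subset, of c] by simp

lemma modinv_eqI:
  assumes "y \<in> {0..<int c}" "[x * y = 1] (mod int c)"
  shows "modinv x c = y"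
proof -
  have "0 \<le> modinv x c \<and> modinv x c < int c \<and> [x * modinv x c = 1] (mod int c)"
    unfolding modinv_def by (rule someI[of _ y]) (use assms in auto)
  then show ?thesis
    using modular_inverse_int_eqI[of y "int c" x] modular_inverse_int_eqI[of "modinv x c" "int c" x] assms
    by auto
qed

lemma modinv_eq_modular_inverse:
  assumes "c > 0" "coprime x (int c)"
  shows "modinv x c = modular_inverse (int c) x"
  using assms by (intro modinv_eqI) (auto simp: modular_inverse_int_nonneg modular_inverse_int_less
      cong_modular_inverse1)

lemma cong_mult_modinv:
  assumes "c > 0" "coprime x (int c)"
  shows "[x * modinv x c = 1] (mod int c)"
  using assms by (simp add: modinv_eq_modular_inverse cong_modular_inverse1)

lemma modinv_in_reduced_residues:
  assumes "c > 0" "x \<in> reduced_residues c"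
  shows "modinv x c \<in> reduced_residues c"
  using assms by (simp add: reduced_residues_def modinv_eq_modular_inverse modular_inverse_int_nonneg
      modular_inverse_int_less)

lemma modinv_modinv:
  assumes "c > 0" "x \<in> reduced_residues c"
  shows "modinv (modinv x c) c = x"
  using assms cong_mult_modinv[OF assms(1), of x]
  by (intro modinv_eqI) (auto simp: reduced_residues_def mult.commute)

lemma bij_betw_modinv: "bij_betw (\<lambda>x. modinv x c) (reduced_residues c) (reduced_residues c)"
proof (cases "c = 0")
  case False
  then show ?thesis
    by (intro bij_betwI[where g = "\<lambda>x. modinv x c"])
      (auto simp: modinv_in_reduced_residues modinv_modinv)
qed (simp add: reduced_residues_def bij_betw_def)

lemma modinv_mod_dvd:
  assumes "c > 0" "d dvd c" "coprime z (int c)"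
  shows "modinv z c mod int d = modinv (z mod int d) d"
proof (rule sym, rule modinv_eqI)
  have "d > 0" using assms(1,2) by (simp add: dvd_pos_nat)
  then show "modinv z c mod int d \<in> {0..<int d}" by simp
  have "[z * modinv z c = 1] (mod int d)"
    using cong_mult_modinv[OF assms(1,3)] assms(2) by (simp add: cong_dvd_modulus)
  then show "[z mod int d * (modinv z c mod int d) = 1] (mod int d)"
    by (simp add: cong_def mod_mult_eq)
qed

lemma coprime_of_prime_divisors_dvd:
  fixes z :: int and b r :: nat
  assumes "\<forall>p. prime p \<and> p dvd r \<longrightarrow> p dvd b" "coprime z (int b)"
  shows "coprime z (int r)"
proof (rule coprimeI)
  fix c assume c: "c dvd z" "c dvd int r"
  show "is_unit c"
  proof (rule ccontr)
    assume "\<not> is_unit c"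
    then obtain p where p: "prime p" "p dvd c"
      using prime_factor_int[of c] by auto
    have "p dvd int r" using p(2) c(2) by (rule dvd_trans)
    then have "nat p dvd r" "prime (nat p)"
      using p(1) prime_ge_0_int[of p] by (simp_all add: nat_dvd_iff)
    then have "p dvd int b"
      using assms(1) p by (metis int_dvd_int_iff prime_ge_0_int int_nat_eq)
    then show False
      using assms(2) p c(1) by (meson coprime_common_divisor dvd_trans not_prime_unit)
  qed
qed

section \<open>Kloosterman sums\<close>

lemma kloosterman_reduced_residues:
  "kloosterman a n c = (\<Sum>x\<in>reduced_residues c. e (of_int (a * x + n * modinv x c) / real c))"
  by (simp add: kloosterman_def reduced_residues_def)

lemma kloosterman_commute: "kloosterman a n c = kloosterman n a c"
proof (cases "c = 0")
  case False
  have "kloosterman a n c = (\<Sum>x\<in>reduced_residues c. e (of_int (a * x + n * modinv x c) / real c))"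
    by (rule kloosterman_reduced_residues)
  also have "\<dots> = (\<Sum>y\<in>reduced_residues c. e (of_int (a * modinv y c + n * y) / real c))"
    using False
    by (intro sum.reindex_bij_witness[where i = "\<lambda>y. modinv y c" and j = "\<lambda>y. modinv y c"])
      (auto simp: modinv_in_reduced_residues modinv_modinv)
  also have "\<dots> = kloosterman n a c"
    by (simp add: kloosterman_reduced_residues add.commute)
  finally show ?thesis .
qed (simp add: kloosterman_def)

lemma kloosterman_zero_left: "kloosterman 0 n c = (\<Sum>v\<in>reduced_residues c. e (of_int (n * v) / real c))"
  unfolding kloosterman_commute[of 0] by (simp add: kloosterman_reduced_residues)

lemma coprime_add_mult_self_iff:
  fixes a m t :: "'a::semiring_gcd"
  shows "coprime (a + m * t) m \<longleftrightarrow> coprime a m"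
  by (metis coprime_iff_gcd_eq_1 gcd.commute gcd_add_mult add.commute mult.commute)

lemma div_less_iff_less_mult_int:
  fixes z b r :: int
  assumes "b > 0"
  shows "z div b < r \<longleftrightarrow> z < r * b"
proof
  assume "z div b < r"
  then have "z div b * b + b \<le> r * b"
    using mult_right_mono[of "z div b + 1" r b] assms by (simp add: distrib_right)
  moreover have "z < z div b * b + b"
    using div_mult_mod_eq[of z b] pos_mod_bound[OF assms, of z] by linarith
  ultimately show "z < r * b" by linarith
next
  assume "z < r * b"
  show "z div b < r"
  proof (rule ccontr)
    assume "\<not> z div b < r"
    then have "r * b \<le> z div b * b" using assms by (intro mult_right_mono) auto
    also have "\<dots> \<le> z" using div_mult_mod_eq[of z b] pos_mod_sign[OF assms, of z] by linarith
    finally show False using \<open>z < r * b\<close> by simp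
  qed
qed

lemma sum_reduced_residues_mult:
  assumes "b > 0" "\<forall>p. prime p \<and> p dvd r \<longrightarrow> p dvd b"
  shows "(\<Sum>z\<in>reduced_residues (b * r). f z)
       = (\<Sum>z\<in>reduced_residues b. \<Sum>t\<in>{0..<int r}. f (z + int b * t))"
proof -
  have coprime_iff: "coprime z (int b * int r) \<longleftrightarrow> coprime z (int b)" for z
    using coprime_of_prime_divisors_dvd[OF assms(2)] by auto
  have lt_iff: "z < int b * int r \<longleftrightarrow> z div int b < int r" for z
    using div_less_iff_less_mult_int[of "int b" z "int r"] assms(1) by (simp add: mult.commute)
  have "(\<Sum>z\<in>reduced_residues (b * r). f z)
      = (\<Sum>(z, t)\<in>reduced_residues b \<times> {0..<int r}. f (z + int b * t))"
    using assms(1)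
    by (intro sum.reindex_bij_witness[where i = "\<lambda>(z, t). z + int b * t"
          and j = "\<lambda>z. (z mod int b, z div int b)"])
      (auto simp: reduced_residues_def coprime_iff coprime_add_mult_self_iff lt_iff
        pos_imp_zdiv_nonneg_iff simp del: coprime_mult_right_iff)
  also have "\<dots> = (\<Sum>z\<in>reduced_residues b. \<Sum>t\<in>{0..<int r}. f (z + int b * t))"
    by (simp add: sum.cartesian_product)
  finally show ?thesis .
qed

lemma kloosterman_mult_modulus:
  assumes "b > 0" "r > 0" "\<forall>p. prime p \<and> p dvd r \<longrightarrow> p dvd b"
  shows "kloosterman (int r * x) n (b * r) = (if int r dvd n then of_nat r else 0) *
           (\<Sum>z\<in>reduced_residues b.
              e (of_int (x * modinv z b) / real b) * e (of_int (n * z) / real (b * r)))"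
proof -
  define F where "F z = e (of_int (x * modinv z b) / real b)" for z
  have summand: "e (of_int (n * z + int r * x * modinv z (b * r)) / real (b * r))
      = F (z mod int b) * e (of_int (n * z) / real (b * r))"
    if z: "z \<in> reduced_residues (b * r)" for z
  proof -
    have "e (of_int (n * z + int r * x * modinv z (b * r)) / real (b * r))
        = e (of_int (x * modinv z (b * r)) / real b) * e (of_int (n * z) / real (b * r))"
      using assms(1,2) by (simp add: e_add[symmetric] field_simps)
    also have "e (of_int (x * modinv z (b * r)) / real b)
        = e (of_int (x * (modinv z (b * r) mod int b)) / real b)"
      by (rule e_div_cong) (simp add: cong_def mod_mult_right_eq)
    also have "modinv z (b * r) mod int b = modinv (z mod int b) b"
      using z assms(1,2) by (intro modinv_mod_dvd) (auto simp: reduced_residues_def)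
    finally show ?thesis by (simp add: F_def)
  qed
  have "kloosterman (int r * x) n (b * r)
      = (\<Sum>z\<in>reduced_residues (b * r). F (z mod int b) * e (of_int (n * z) / real (b * r)))"
    unfolding kloosterman_commute[of "int r * x"] unfolding kloosterman_reduced_residues
    by (intro sum.cong refl summand)
  also have "\<dots> = (\<Sum>z\<in>reduced_residues b. \<Sum>t\<in>{0..<int r}.
                     F z * e (of_int (n * z) / real (b * r)) * e (of_int (n * t) / real r))"
  proof -
    have "F ((z + int b * t) mod int b) * e (of_int (n * (z + int b * t)) / real (b * r))
        = F z * e (of_int (n * z) / real (b * r)) * e (of_int (n * t) / real r)"
      if "z \<in> reduced_residues b" for z t
    proof -
      have "(z + int b * t) mod int b = z" using that by (simp add: reduced_residues_def)
      moreover have "of_int (n * (z + int b * t)) / real (b * r)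
          = of_int (n * z) / real (b * r) + of_int (n * t) / real r"
        using assms(1,2) by (simp add: field_simps)
      ultimately show ?thesis by (simp add: e_add)
    qed
    then show ?thesis
      unfolding sum_reduced_residues_mult[OF assms(1,3)] by (intro sum.cong refl)
  qed
  also have "\<dots> = (if int r dvd n then of_nat r else 0) *
                   (\<Sum>z\<in>reduced_residues b. F z * e (of_int (n * z) / real (b * r)))"
    unfolding sum_e_mult_div[OF assms(2), symmetric] sum_distrib_left sum_distrib_right
    by (simp add: mult_ac)
  finally show ?thesis by (simp add: F_def)
qed

section \<open>Mean-square estimates\<close>

lemma norm_sum_squared_le_card:
  fixes f :: "'a \<Rightarrow> 'b::real_normed_vector"
  shows "(norm (\<Sum>u\<in>A. f u))\<^sup>2 \<le> real (card A) * (\<Sum>u\<in>A. (norm (f u))\<^sup>2)"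
proof -
  have "(norm (\<Sum>u\<in>A. f u))\<^sup>2 \<le> (\<Sum>u\<in>A. norm (f u))\<^sup>2"
    by (intro power_mono norm_sum) simp
  also have "\<dots> \<le> (\<Sum>u\<in>A. (norm (f u))\<^sup>2) * real (card A)"
    by (rule sum_squared_le_sum_of_squares)
  finally show ?thesis by (simp add: mult.commute)
qed

lemma sum_norm_e_sum_squared:
  fixes c :: "'j \<Rightarrow> complex" and \<phi> :: "'j \<Rightarrow> int"
  assumes "b > 0" "finite J" "\<phi> ` J \<subseteq> {0..<int b}" "inj_on \<phi> J"
  shows "(\<Sum>x\<in>{0..<int b}. (cmod (\<Sum>j\<in>J. e (of_int (x * \<phi> j) / real b) * c j))\<^sup>2)
         = real b * (\<Sum>j\<in>J. (cmod (c j))\<^sup>2)"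
proof -
  define E where "E x j = e (of_int (x * \<phi> j) / real b)" for x j
  have orth: "(\<Sum>x\<in>{0..<int b}. E x j * cnj (E x k)) = (if j = k then of_nat b else 0)"
    if "j \<in> J" "k \<in> J" for j k
  proof -
    have "E x j * cnj (E x k) = e (of_int ((\<phi> j - \<phi> k) * x) / real b)" for x
      by (simp add: E_def cnj_e e_add[symmetric] diff_divide_distrib algebra_simps)
    moreover have "int b dvd (\<phi> j - \<phi> k) \<longleftrightarrow> j = k"
    proof
      assume "int b dvd (\<phi> j - \<phi> k)"
      then have "\<phi> j = \<phi> k"
        using assms(3) that by (intro cong_less_imp_eq_int) (auto simp: cong_iff_dvd_diff)
      then show "j = k" using assms(4) that by (meson inj_onD)
    qed simp
    ultimately show ?thesis using sum_e_mult_div[OF assms(1), of "\<phi> j - \<phi> k"] by simp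
  qed
  have "complex_of_real (\<Sum>x\<in>{0..<int b}. (cmod (\<Sum>j\<in>J. E x j * c j))\<^sup>2)
      = (\<Sum>x\<in>{0..<int b}. (\<Sum>j\<in>J. E x j * c j) * cnj (\<Sum>k\<in>J. E x k * c k))"
    by (simp only: of_real_sum complex_norm_square)
  also have "\<dots> = (\<Sum>x\<in>{0..<int b}. \<Sum>j\<in>J. \<Sum>k\<in>J. c j * cnj (c k) * (E x j * cnj (E x k)))"
    by (simp add: cnj_sum sum_product mult_ac)
  also have "\<dots> = (\<Sum>j\<in>J. \<Sum>k\<in>J. c j * cnj (c k) * (\<Sum>x\<in>{0..<int b}. E x j * cnj (E x k)))"
    by (simp add: sum_distrib_left sum.swap[of _ "{0..<int b}"])
  also have "\<dots> = (\<Sum>j\<in>J. of_nat b * (c j * cnj (c j)))"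
  proof (rule sum.cong[OF refl])
    fix j assume j: "j \<in> J"
    have "(\<Sum>k\<in>J. c j * cnj (c k) * (\<Sum>x\<in>{0..<int b}. E x j * cnj (E x k)))
        = (\<Sum>k\<in>J. if j = k then c j * cnj (c k) * of_nat b else 0)"
      using j by (intro sum.cong refl) (simp add: orth)
    then show "(\<Sum>k\<in>J. c j * cnj (c k) * (\<Sum>x\<in>{0..<int b}. E x j * cnj (E x k)))
        = of_nat b * (c j * cnj (c j))"
      using assms(2) j by (simp add: mult_ac)
  qed
  also have "\<dots> = complex_of_real (real b * (\<Sum>j\<in>J. (cmod (c j))\<^sup>2))"
    by (simp only: of_real_mult of_real_sum complex_norm_square sum_distrib_left of_real_of_nat_eq)
  finally show ?thesis unfolding E_def of_real_eq_iff .
qed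

lemma crt_combination_in_reduced_residues:
  assumes "b > 0" "s > 0" "coprime b s" "coprime k (int s)"
    and "z \<in> reduced_residues b" "v \<in> reduced_residues s"
  shows "(int s * z + int b * k * v) mod int (b * s) \<in> reduced_residues (b * s)"
proof -
  have "coprime (int s) (int b)" "coprime (int b) (int s)"
    using assms(3) by (simp_all add: coprime_commute)
  then have "coprime (int s * z + int b * (k * v)) (int b)" "coprime (int b * k * v + int s * z) (int s)"
    using assms(4-6) by (simp_all add: coprime_add_mult_self_iff reduced_residues_def)
  then have "coprime (int s * z + int b * k * v) (int (b * s))"
    by (simp add: algebra_simps)
  then have "coprime ((int s * z + int b * k * v) mod int (b * s)) (int (b * s))"
    using assms(1,2) by (subst coprime_mod_left_iff) auto
  then show ?thesis
    using assms(1,2) by (simp only: reduced_residues_def) simp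
qed

lemma inj_on_crt_combination:
  assumes "coprime b s" "coprime k (int s)"
  shows "inj_on (\<lambda>(z, v). (int s * z + int b * k * v) mod int (b * s)) (reduced_residues b \<times> reduced_residues s)"
proof (rule inj_onI, clarify)
  fix z v z' v'
  assume z: "z \<in> reduced_residues b" "z' \<in> reduced_residues b"
    and v: "v \<in> reduced_residues s" "v' \<in> reduced_residues s"
    and eq: "(int s * z + int b * k * v) mod int (b * s) = (int s * z' + int b * k * v') mod int (b * s)"
  then have c: "[int s * z + int b * k * v = int s * z' + int b * k * v'] (mod int b * int s)"
    by (simp add: cong_def)
  have "[int s * z = int s * z'] (mod int b)"
    using cong_dvd_modulus[OF c, of "int b"] by (simp add: cong_def mult.assoc)
  then have "[z = z'] (mod int b)"
    using assms(1) by (simp add: cong_mult_lcancel coprime_commute)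
  then have "z = z'"
    using z by (intro cong_less_imp_eq_int) (auto simp: reduced_residues_def)
  have "[int b * k * v = int b * k * v'] (mod int s)"
    using cong_dvd_modulus[OF c, of "int s"] by (simp add: cong_def algebra_simps)
  then have "[v = v'] (mod int s)"
    using assms by (simp add: cong_mult_lcancel coprime_commute)
  then have "v = v'"
    using v by (intro cong_less_imp_eq_int) (auto simp: reduced_residues_def)
  with \<open>z = z'\<close> show "z = z' \<and> v = v'" by simp
qed

lemma sum_crt_combination_le:
  fixes f :: "int \<Rightarrow> real"
  assumes "b > 0" "s > 0" "coprime b s" "coprime k (int s)" "\<And>w. f w \<ge> 0"
  shows "(\<Sum>z\<in>reduced_residues b. \<Sum>v\<in>reduced_residues s. f ((int s * z + int b * k * v) mod int (b * s)))
         \<le> (\<Sum>w\<in>reduced_residues (b * s). f w)"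
proof -
  let ?g = "\<lambda>(z, v). (int s * z + int b * k * v) mod int (b * s)"
  have "(\<Sum>z\<in>reduced_residues b. \<Sum>v\<in>reduced_residues s. f ((int s * z + int b * k * v) mod int (b * s)))
      = (\<Sum>w\<in>?g ` (reduced_residues b \<times> reduced_residues s). f w)"
    using sum.reindex[OF inj_on_crt_combination[OF assms(3,4)], of f]
    by (simp add: sum.cartesian_product comp_def case_prod_beta)
  also have "\<dots> \<le> (\<Sum>w\<in>reduced_residues (b * s). f w)"
    using crt_combination_in_reduced_residues[OF assms(1-4)] assms(5) by (intro sum_mono2) auto
  finally show ?thesis .
qed

lemma sum_norm_e_modinv_sum_squared_le:
  fixes T :: "int \<Rightarrow> complex"
  assumes "b > 0" "s > 0" "coprime b s" "coprime k (int s)" "\<And>w. T (w mod int (b * s)) = T w"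
  shows "(\<Sum>x\<in>reduced_residues b. (cmod (\<Sum>z\<in>reduced_residues b.
            e (of_int (x * modinv z b) / real b) * (\<Sum>v\<in>reduced_residues s. T (int s * z + int b * k * v))))\<^sup>2)
         \<le> real (b * s) * (\<Sum>w\<in>reduced_residues (b * s). (cmod (T w))\<^sup>2)"
    (is "(\<Sum>x\<in>_. (cmod (\<Sum>z\<in>_. ?E x z * ?H z))\<^sup>2) \<le> _")
proof -
  have "(\<Sum>x\<in>reduced_residues b. (cmod (\<Sum>z\<in>reduced_residues b. ?E x z * ?H z))\<^sup>2)
      \<le> (\<Sum>x\<in>{0..<int b}. (cmod (\<Sum>z\<in>reduced_residues b. ?E x z * ?H z))\<^sup>2)"
    using reduced_residues_subset by (intro sum_mono2) auto
  also have "\<dots> = real b * (\<Sum>z\<in>reduced_residues b. (cmod (?H z))\<^sup>2)"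
  proof (rule sum_norm_e_sum_squared)
    show "(\<lambda>z. modinv z b) ` reduced_residues b \<subseteq> {0..<int b}"
      using assms(1) modinv_in_reduced_residues reduced_residues_subset by blast
  qed (use assms(1) bij_betw_imp_inj_on[OF bij_betw_modinv] in auto)
  also have "\<dots> \<le> real b * (\<Sum>z\<in>reduced_residues b.
                     real s * (\<Sum>v\<in>reduced_residues s. (cmod (T (int s * z + int b * k * v)))\<^sup>2))"
  proof (intro mult_left_mono sum_mono)
    fix z
    show "(cmod (?H z))\<^sup>2 \<le> real s * (\<Sum>v\<in>reduced_residues s. (cmod (T (int s * z + int b * k * v)))\<^sup>2)"
      using card_reduced_residues_le[of s]
      by (intro order_trans[OF norm_sum_squared_le_card] mult_right_mono sum_nonneg) simp_all
  qed simp
  also have "\<dots> = real (b * s) * (\<Sum>z\<in>reduced_residues b. \<Sum>v\<in>reduced_residues s.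
                     (cmod (T ((int s * z + int b * k * v) mod int (b * s))))\<^sup>2)"
    unfolding assms(5) by (simp add: sum_distrib_left mult_ac)
  also have "\<dots> \<le> real (b * s) * (\<Sum>w\<in>reduced_residues (b * s). (cmod (T w))\<^sup>2)"
    using assms(1-4) by (intro mult_left_mono sum_crt_combination_le) auto
  finally show ?thesis .
qed

lemma sum_kloosterman_product:
  fixes a :: "nat \<Rightarrow> complex"
  assumes "b > 0" "s > 0" "r > 0" "\<forall>p. prime p \<and> p dvd r \<longrightarrow> p dvd b" "finite A"
  shows "(\<Sum>m\<in>A. a m * kloosterman 0 (int m) s * kloosterman (int r * x) (int m) (b * r))
       = of_nat r * (\<Sum>z\<in>reduced_residues b. e (of_int (x * modinv z b) / real b) *
           (\<Sum>v\<in>reduced_residues s. \<Sum>m\<in>{m\<in>A. r dvd m}.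
              a m * e (of_int (int s * z + int b * int r * v) * real (m div r) / real (b * s))))"
proof -
  define F where "F z = e (of_int (x * modinv z b) / real b)" for z
  define E where "E m z v = e (of_int (int s * z + int b * int r * v) * real (m div r) / real (b * s))" for m z v
  have combine: "e (of_int (int m * v) / real s) * e (of_int (int m * z) / real (b * r)) = E m z v"
    if "r dvd m" for m z v
  proof -
    from that obtain n where "m = r * n" by blast
    then have "of_int (int m * v) / real s + of_int (int m * z) / real (b * r)
        = of_int (int s * z + int b * int r * v) * real (m div r) / real (b * s)"
      using assms(1-3) by (simp add: field_simps)
    then show ?thesis by (simp add: E_def e_add[symmetric])
  qed
  have "(\<Sum>m\<in>A. a m * kloosterman 0 (int m) s * kloosterman (int r * x) (int m) (b * r))
      = (\<Sum>m\<in>A. if r dvd m then of_nat r * (\<Sum>z\<in>reduced_residues b. \<Sum>v\<in>reduced_residues s.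
            F z * (a m * (e (of_int (int m * v) / real s) * e (of_int (int m * z) / real (b * r))))) else 0)"
    unfolding kloosterman_zero_left kloosterman_mult_modulus[OF assms(1,3,4)] F_def
    by (intro sum.cong refl) (simp add: sum_distrib_left sum_distrib_right mult_ac)
  also have "\<dots> = (\<Sum>m\<in>{m\<in>A. r dvd m}. of_nat r * (\<Sum>z\<in>reduced_residues b. \<Sum>v\<in>reduced_residues s.
            F z * (a m * (e (of_int (int m * v) / real s) * e (of_int (int m * z) / real (b * r))))))"
    by (rule sum.inter_filter[OF assms(5), symmetric])
  also have "\<dots> = (\<Sum>m\<in>{m\<in>A. r dvd m}. of_nat r * (\<Sum>z\<in>reduced_residues b. \<Sum>v\<in>reduced_residues s.
            F z * (a m * E m z v)))"
    by (intro sum.cong refl) (simp only: mem_Collect_eq combine)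
  also have "\<dots> = of_nat r * (\<Sum>z\<in>reduced_residues b. F z *
            (\<Sum>v\<in>reduced_residues s. \<Sum>m\<in>{m\<in>A. r dvd m}. a m * E m z v))"
    by (simp add: sum_distrib_left sum.swap[of _ "{m\<in>A. r dvd m}"])
  finally show ?thesis by (simp add: F_def E_def)
qed

theorem lemma11p4:
  fixes b s r N :: nat and a :: "nat \<Rightarrow> complex"
  assumes "b > 0" and "s > 0" and "r > 0"
    and "coprime b s"
    and "\<forall>p. prime p \<and> p dvd r \<longrightarrow> p dvd b"
  shows "(\<Sum>x\<in>{x\<in>{0..<int b}. coprime x (int b)}.
           (cmod (\<Sum>m\<in>{1..N}. a m * kloosterman 0 (int m) s
                                  * kloosterman (int r * x) (int m) (b * r)))\<^sup>2)
         \<le> real (b * r ^ 2 * s) *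
           (\<Sum>x\<in>{x\<in>{0..<int (b * s)}. coprime x (int (b * s))}.
              (cmod (\<Sum>m\<in>{m\<in>{1..N}. r dvd m}.
                  a m * e (real_of_int x * real (m div r) / real (b * s))))\<^sup>2)"
proof -
  define T where "T w = (\<Sum>m\<in>{m\<in>{1..N}. r dvd m}. a m * e (of_int w * real (m div r) / real (b * s)))" for w
  have "coprime (int s) (int b)"
    using assms(4) by (simp add: coprime_commute)
  then have "coprime (int s) (int r)"
    by (rule coprime_of_prime_divisors_dvd[OF assms(5)])
  then have coprime_rs: "coprime (int r) (int s)" by (simp add: coprime_commute)
  have periodic: "T (w mod int (b * s)) = T w" for w
    unfolding T_def by (simp only: e_mod_mult_div)
  have inner: "(\<Sum>m\<in>{1..N}. a m * kloosterman 0 (int m) s * kloosterman (int r * x) (int m) (b * r))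
      = of_nat r * (\<Sum>z\<in>reduced_residues b. e (of_int (x * modinv z b) / real b) *
           (\<Sum>v\<in>reduced_residues s. T (int s * z + int b * int r * v)))" for x
    unfolding T_def by (rule sum_kloosterman_product[OF assms(1-3,5)]) simp
  have "(\<Sum>x\<in>reduced_residues b. (cmod (\<Sum>m\<in>{1..N}. a m * kloosterman 0 (int m) s
                                  * kloosterman (int r * x) (int m) (b * r)))\<^sup>2)
      = real r ^ 2 * (\<Sum>x\<in>reduced_residues b. (cmod (\<Sum>z\<in>reduced_residues b.
           e (of_int (x * modinv z b) / real b) * (\<Sum>v\<in>reduced_residues s. T (int s * z + int b * int r * v))))\<^sup>2)"
    unfolding inner norm_mult norm_of_nat power_mult_distrib by (rule sum_distrib_left[symmetric])
  also have "\<dots> \<le> real r ^ 2 * (real (b * s) * (\<Sum>w\<in>reduced_residues (b * s). (cmod (T w))\<^sup>2))"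
    using assms(1,2,4) coprime_rs periodic by (intro mult_left_mono sum_norm_e_modinv_sum_squared_le) auto
  also have "\<dots> = real (b * r ^ 2 * s) * (\<Sum>w\<in>reduced_residues (b * s). (cmod (T w))\<^sup>2)"
    by (simp add: mult_ac)
  finally show ?thesis
    by (simp only: reduced_residues_def T_def)
qed

end
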